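(* In the setting below, suppose Slater's condition $\sum_{j=1}^J\gamma_j\epsilon_j<C$ holds, and let $\mathcal{B}\subseteq\{1,\dots,J\}$ contain exactly $J-1$ indices, the remaining one being $j''$. Then under the allocation $\mathbf{R}^\ast(\mathcal{B})$ the variance constraint of portfolio $j''$ is satisfied, i.e. $\sigma^2_{\mathcal{D},j''}/r_{j''}+\sum_{i\in\mathcal{I}_{j''}}\sigma_i^2/R_i<V_{j''}$.
   Context: There are $J$ portfolios; portfolio $j$ has independent accounts $\mathcal{I}_j$ with standard deviations $\sigma_i>0$ and a dependent block $\mathcal{D}_j$ of $|\mathcal{D}_j|$ accounts whose total has standard deviation $\sigma_{\mathcal{D},j}\ge0$ ($\sigma_{\mathcal{D},j}\sqrt{|\mathcal{D}_j|}=0$ if $\mathcal{D}_j=\emptyset$). Budget $C>0$, variance bounds $V_j>0$. Let $\gamma_j=\sigma_{\mathcal{D},j}\sqrt{|\mathcal{D}_j|}+\sum_{i\in\mathcal{I}_j}\sigma_i>0$, $\epsilon_j=\gamma_j/V_j$, $\alpha(\mathcal{B})=\big(C-\sum_{j\in\mathcal{B}}\gamma_j\epsilon_j\big)/\sum_{j\notin\mathcal{B}}\gamma_j$, and $e_j(\mathcal{B})=\epsilon_j$ for $j\in\mathcal{B}$, $e_j(\mathcal{B})=\alpha(\mathcal{B})$ for $j\notin\mathcal{B}$. The allocation $\mathbf{R}^\ast(\mathcal{B})$ sets $R_i=\sigma_ie_j(\mathcal{B})$ for $i\in\mathcal{I}_j$ and the common realisation number $r_j=\frac{\sigma_{\mathcal{D},j}}{\sqrt{|\mathcal{D}_j|}}e_j(\mathcal{B})$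 for accounts of $\mathcal{D}_j$; it solves the stationarity equations of the Lagrangian of the problem of minimising $\sum_j(\sigma^2_{\mathcal{D},j}/r_j+\sum_{i\in\mathcal{I}_j}\sigma_i^2/R_i)$ over positive reals subject to $\sum_jr_j|\mathcal{D}_j|+\sum_iR_i=C$ and $\sigma^2_{\mathcal{D},j}/r_j+\sum_{i\in\mathcal{I}_j}\sigma_i^2/R_i\le V_j$, with the constraints in $\mathcal{B}$ active. Terms involving $r_j$ are absent when $\mathcal{D}_j=\emptyset$. *)

theory Defs
  imports Complex_Main
begin

text \<open>Portfolios are indexed by 1..J. Portfolio j has independent accounts Ind j
(standard deviations sig i) and a dependent block Dep j whose total has standard
deviation sigD j.\<close>

definition gam :: "(nat \<Rightarrow> 'a set) \<Rightarrow> (nat \<Rightarrow> 'a set) \<Rightarrow> ('a \<Rightarrow> real) \<Rightarrow> (nat \<Rightarrow> real) \<Rightarrow> nat \<Rightarrow> real" where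
  "gam Ind Dep sig sigD j = sigD j * sqrt (real (card (Dep j))) + (\<Sum>i\<in>Ind j. sig i)"

definition eps :: "(nat \<Rightarrow> 'a set) \<Rightarrow> (nat \<Rightarrow> 'a set) \<Rightarrow> ('a \<Rightarrow> real) \<Rightarrow> (nat \<Rightarrow> real) \<Rightarrow> (nat \<Rightarrow> real) \<Rightarrow> nat \<Rightarrow> real" where
  "eps Ind Dep sig sigD V j = gam Ind Dep sig sigD j / V j"

definition alpha :: "nat \<Rightarrow> (nat \<Rightarrow> 'a set) \<Rightarrow> (nat \<Rightarrow> 'a set) \<Rightarrow> ('a \<Rightarrow> real) \<Rightarrow> (nat \<Rightarrow> real) \<Rightarrow> (nat \<Rightarrow> real) \<Rightarrow> real \<Rightarrow> nat set \<Rightarrow> real" where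
  "alpha J Ind Dep sig sigD V C B =
     (C - (\<Sum>j\<in>B. gam Ind Dep sig sigD j * eps Ind Dep sig sigD V j))
     / (\<Sum>j\<in>{1..J} - B. gam Ind Dep sig sigD j)"

definition eB :: "nat \<Rightarrow> (nat \<Rightarrow> 'a set) \<Rightarrow> (nat \<Rightarrow> 'a set) \<Rightarrow> ('a \<Rightarrow> real) \<Rightarrow> (nat \<Rightarrow> real) \<Rightarrow> (nat \<Rightarrow> real) \<Rightarrow> real \<Rightarrow> nat set \<Rightarrow> nat \<Rightarrow> real" where
  "eB J Ind Dep sig sigD V C B j =
     (if j \<in> B then eps Ind Dep sig sigD V j else alpha J Ind Dep sig sigD V C B)"

text \<open>Allocation R^*(B): R_i for an independent account i of portfolio j, and the common
realisation number r_j of the dependent block of portfolio j.\<close>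

definition Rstar :: "nat \<Rightarrow> (nat \<Rightarrow> 'a set) \<Rightarrow> (nat \<Rightarrow> 'a set) \<Rightarrow> ('a \<Rightarrow> real) \<Rightarrow> (nat \<Rightarrow> real) \<Rightarrow> (nat \<Rightarrow> real) \<Rightarrow> real \<Rightarrow> nat set \<Rightarrow> nat \<Rightarrow> 'a \<Rightarrow> real" where
  "Rstar J Ind Dep sig sigD V C B j i = sig i * eB J Ind Dep sig sigD V C B j"

definition rstar :: "nat \<Rightarrow> (nat \<Rightarrow> 'a set) \<Rightarrow> (nat \<Rightarrow> 'a set) \<Rightarrow> ('a \<Rightarrow> real) \<Rightarrow> (nat \<Rightarrow> real) \<Rightarrow> (nat \<Rightarrow> real) \<Rightarrow> real \<Rightarrow> nat set \<Rightarrow> nat \<Rightarrow> real" where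
  "rstar J Ind Dep sig sigD V C B j =
     sigD j / sqrt (real (card (Dep j))) * eB J Ind Dep sig sigD V C B j"

definition variance_at :: "nat \<Rightarrow> (nat \<Rightarrow> 'a set) \<Rightarrow> (nat \<Rightarrow> 'a set) \<Rightarrow> ('a \<Rightarrow> real) \<Rightarrow> (nat \<Rightarrow> real) \<Rightarrow> (nat \<Rightarrow> real) \<Rightarrow> real \<Rightarrow> nat set \<Rightarrow> nat \<Rightarrow> real" where
  "variance_at J Ind Dep sig sigD V C B j =
     (if Dep j = {} then 0 else (sigD j)\<^sup>2 / rstar J Ind Dep sig sigD V C B j)
     + (\<Sum>i\<in>Ind j. (sig i)\<^sup>2 / Rstar J Ind Dep sig sigD V C B j i)"

end

theory Submission
  imports Defs
begin

text \<open>Under \<open>R\<^sup>*(B)\<close> every portfolio \<open>j\<close> has variance exactly \<open>\<gamma>\<^sub>j / e\<^sub>j(B)\<close>, and its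
bound \<open>V\<^sub>j\<close> equals \<open>\<gamma>\<^sub>j / \<epsilon>\<^sub>j\<close>; so an inactive portfolio meets its bound strictly as soon
as \<open>\<alpha>(B) > \<epsilon>\<^sub>j\<close>. When \<open>j''\<close> is the only inactive portfolio,
\<open>\<alpha>(B) \<gamma>\<^sub>j\<^sub>'\<^sub>' = C - \<Sum>\<^sub>j\<^sub>\<in>\<^sub>B \<gamma>\<^sub>j \<epsilon>\<^sub>j\<close>, which exceeds \<open>\<gamma>\<^sub>j\<^sub>'\<^sub>' \<epsilon>\<^sub>j\<^sub>'\<^sub>'\<close> precisely by Slater's
condition.\<close>

text \<open>This identity holds without side conditions: each summand of the variance is
either \<open>\<sigma>\<^sup>2 / (\<sigma> e)\<close> or, when some factor vanishes, \<open>0\<close> on both sides by the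
convention \<open>x / 0 = 0\<close>.\<close>

lemma variance_at_eq_gam_div_eB:
  "variance_at J Ind Dep sig sigD V C B j =
     gam Ind Dep sig sigD j / eB J Ind Dep sig sigD V C B j"
proof -
  let ?e = "eB J Ind Dep sig sigD V C B j"
  have dependent: "(if Dep j = {} then 0 else (sigD j)\<^sup>2 / rstar J Ind Dep sig sigD V C B j)
      = sigD j * sqrt (real (card (Dep j))) / ?e"
    unfolding rstar_def
    by (cases "sigD j = 0"; cases "card (Dep j) = 0"; cases "?e = 0")
       (auto simp: power2_eq_square field_simps)
  have independent: "(sig i)\<^sup>2 / Rstar J Ind Dep sig sigD V C B j i = sig i / ?e" for i
    unfolding Rstar_def
    by (cases "sig i = 0"; cases "?e = 0") (auto simp: power2_eq_square field_simps)
  show ?thesis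
    unfolding variance_at_def dependent independent gam_def
    by (simp add: add_divide_distrib sum_divide_distrib)
qed

lemma variance_at_less_if_eps_less_alpha:
  assumes "j \<notin> B" and "gam Ind Dep sig sigD j > 0" and "V j > 0"
    and "eps Ind Dep sig sigD V j < alpha J Ind Dep sig sigD V C B"
  shows "variance_at J Ind Dep sig sigD V C B j < V j"
proof -
  let ?g = "gam Ind Dep sig sigD j" and ?\<epsilon> = "eps Ind Dep sig sigD V j"
  have "?\<epsilon> > 0"
    using assms(2,3) by (simp add: eps_def)
  have "variance_at J Ind Dep sig sigD V C B j = ?g / alpha J Ind Dep sig sigD V C B"
    using assms(1) by (simp add: variance_at_eq_gam_div_eB eB_def)
  also have "\<dots> < ?g / ?\<epsilon>"
    using assms(2,4) \<open>?\<epsilon> > 0\<close> by (simp add: divide_strict_left_mono)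
  also have "\<dots> = V j"
    using assms(2,3) by (simp add: eps_def)
  finally show ?thesis .
qed

lemma eps_less_alpha_of_slater:
  assumes "j \<in> {1..J}" and "gam Ind Dep sig sigD j > 0"
    and slater: "(\<Sum>k\<in>{1..J}. gam Ind Dep sig sigD k * eps Ind Dep sig sigD V k) < C"
  shows "eps Ind Dep sig sigD V j < alpha J Ind Dep sig sigD V C ({1..J} - {j})"
proof -
  let ?g = "gam Ind Dep sig sigD" and ?\<epsilon> = "eps Ind Dep sig sigD V"
  let ?rest = "(\<Sum>k\<in>{1..J} - {j}. ?g k * ?\<epsilon> k)"
  have "{1..J} - ({1..J} - {j}) = {j}"
    using assms(1) by auto
  then have "alpha J Ind Dep sig sigD V C ({1..J} - {j}) = (C - ?rest) / ?g j"
    by (simp add: alpha_def)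
  moreover have "?g j * ?\<epsilon> j < C - ?rest"
    using slater assms(1) by (simp add: sum.remove)
  ultimately show ?thesis
    using assms(2) by (simp add: pos_less_divide_eq mult.commute)
qed

theorem lemma7:
  fixes J :: nat and Ind Dep :: "nat \<Rightarrow> 'a set" and sig :: "'a \<Rightarrow> real"
    and sigD V :: "nat \<Rightarrow> real" and C :: real and B :: "nat set" and j'' :: nat
  assumes fin_Ind: "\<forall>j\<in>{1..J}. finite (Ind j)"
    and fin_Dep: "\<forall>j\<in>{1..J}. finite (Dep j)"
    and sig_pos: "\<forall>j\<in>{1..J}. \<forall>i\<in>Ind j. sig i > 0"
    and sigD_nonneg: "\<forall>j\<in>{1..J}. sigD j \<ge> 0"
    and gam_pos: "\<forall>j\<in>{1..J}. gam Ind Dep sig sigD j > 0"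
    and C_pos: "C > 0"
    and V_pos: "\<forall>j\<in>{1..J}. V j > 0"
    and slater: "(\<Sum>j\<in>{1..J}. gam Ind Dep sig sigD j * eps Ind Dep sig sigD V j) < C"
    and jpp: "j'' \<in> {1..J}"
    and B_def: "B = {1..J} - {j''}"
  shows "variance_at J Ind Dep sig sigD V C B j'' < V j''"
proof (rule variance_at_less_if_eps_less_alpha)
  show "j'' \<notin> B" and "gam Ind Dep sig sigD j'' > 0" and "V j'' > 0"
    using B_def gam_pos V_pos jpp by auto
  then show "eps Ind Dep sig sigD V j'' < alpha J Ind Dep sig sigD V C B"
    unfolding B_def using eps_less_alpha_of_slater[OF jpp _ slater] by blast
qed

end
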